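(* Let $(X,S)$ be an association scheme with the trivial partition $S=\{\mathbf{1},\sigma\}$, where $\mathbf{1}=\{(x,x)\mid x\in X\}$ and $\sigma=(X\times X)\setminus\mathbf{1}$, and suppose $\sharp X\geq3$. Let $F,G\colon\jmath(X,S)\to\jmath(X,S)$ be self-homotopy equivalences with $F\sim G$. Then $F=G$.
   Context: An association scheme is a pair $(X,S)$ with $X$ a finite set and $S$ a partition of $X\times X$ containing $\{(x,x)\mid x\in X\}$, closed under $g\mapsto g^*=\{(y,x)\mid(x,y)\in g\}$, such that for all $e,f,g\in S$ the number $\sharp\{y\in X\mid(x,y)\in e,(y,z)\in f\}$ is the same for all $(x,z)\in g$. The quasi-schemoid $\jmath(X,S)=(\mathcal{C},S)$ has $ob(\mathcal{C})=X$, $\mathrm{Hom}_{\mathcal{C}}(y,x)=\{(x,y)\}$, composition $(z,x)\circ(x,y)=(z,y)$, and partition $S$ of $mor(\mathcal{C})=X\times X$. A morphism of quasi-schemoids is a functor sending each block of the source partition into some block of the target partition. Product: $(\mathcal{C},S)\times(\mathcal{E},S')=(\mathcal{C}\times\mathcal{E},\{\sigma\times\tau\})$. $[1]$ has objects $0,1$ and one non-identity morphism $0\to1$; $I=([1],\{\{f\}\}_{f})$. A homotopy $H\colon F\Rightarrow G$ is a morphism $H\colon(\mathcal{C},S)\times I\to(\mathcal{D},S')$ with $H\circ\varepsilon_0=F$, $H\circ\varepsilon_1=G$ ($\varepsilon_i(a)=(a,i)$, $\varepsilon_i(f)=(f,1_i)$). $F\sim G$ means there is a homotopy $F\Rightarrow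 G$ or $G\Rightarrow F$; $F\simeq G$ means a finite chain $F=F_0\sim\cdots\sim F_n=G$. A self-homotopy equivalence of $A$ is a morphism $F\colon A\to A$ for which there is $G\colon A\to A$ with $FG\simeq1$ and $GF\simeq1$. *)

theory Defs
  imports Main "HOL-Library.Disjoint_Sets"
begin

definition is_assoc_scheme :: "'a set \<Rightarrow> ('a \<times> 'a) set set \<Rightarrow> bool" where
  "is_assoc_scheme X S \<longleftrightarrow>
     finite X \<and> partition_on (X \<times> X) S \<and> Id_on X \<in> S \<and>
     (\<forall>g\<in>S. converse g \<in> S) \<and>
     (\<forall>e\<in>S. \<forall>f\<in>S. \<forall>g\<in>S. \<forall>p\<in>g. \<forall>q\<in>g.
        card {y\<in>X. (fst p, y) \<in> e \<and> (y, snd p) \<in> f}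
      = card {y\<in>X. (fst q, y) \<in> e \<and> (y, snd q) \<in> f})"

record ('o, 'm) qschemoid =
  Ob   :: "'o set"
  Mor  :: "'m set"
  Dom  :: "'m \<Rightarrow> 'o"
  Cod  :: "'m \<Rightarrow> 'o"
  Idm  :: "'o \<Rightarrow> 'm"
  Cmp  :: "'m \<Rightarrow> 'm \<Rightarrow> 'm"   (* Cmp g f = g \<circ> f, defined when Dom g = Cod f *)
  Part :: "'m set set"

definition qs_morphism ::
  "('o1, 'm1) qschemoid \<Rightarrow> ('o2, 'm2) qschemoid \<Rightarrow> ('o1 \<Rightarrow> 'o2) \<times> ('m1 \<Rightarrow> 'm2) \<Rightarrow> bool" where
  "qs_morphism A B F \<longleftrightarrow>
     (\<forall>a\<in>Ob A. fst F a \<in> Ob B) \<and>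
     (\<forall>m\<in>Mor A. snd F m \<in> Mor B \<and> Dom B (snd F m) = fst F (Dom A m)
                 \<and> Cod B (snd F m) = fst F (Cod A m)) \<and>
     (\<forall>a\<in>Ob A. snd F (Idm A a) = Idm B (fst F a)) \<and>
     (\<forall>g\<in>Mor A. \<forall>f\<in>Mor A. Dom A g = Cod A f \<longrightarrow>
         snd F (Cmp A g f) = Cmp B (snd F g) (snd F f)) \<and>
     (\<forall>\<sigma>\<in>Part A. \<exists>\<tau>\<in>Part B. snd F ` \<sigma> \<subseteq> \<tau>)"

definition fun_eq :: "('o1, 'm1) qschemoid \<Rightarrow> ('o1 \<Rightarrow> 'o2) \<times> ('m1 \<Rightarrow> 'm2)
   \<Rightarrow> ('o1 \<Rightarrow> 'o2) \<times> ('m1 \<Rightarrow> 'm2) \<Rightarrow> bool" where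
  "fun_eq A F G \<longleftrightarrow> (\<forall>a\<in>Ob A. fst F a = fst G a) \<and> (\<forall>m\<in>Mor A. snd F m = snd G m)"

definition fcomp :: "('o2 \<Rightarrow> 'o3) \<times> ('m2 \<Rightarrow> 'm3) \<Rightarrow> ('o1 \<Rightarrow> 'o2) \<times> ('m1 \<Rightarrow> 'm2)
   \<Rightarrow> ('o1 \<Rightarrow> 'o3) \<times> ('m1 \<Rightarrow> 'm3)" where
  "fcomp F G = (fst F \<circ> fst G, snd F \<circ> snd G)"

definition fid :: "('o \<Rightarrow> 'o) \<times> ('m \<Rightarrow> 'm)" where
  "fid = (id, id)"

definition qs_prod :: "('o1, 'm1) qschemoid \<Rightarrow> ('o2, 'm2) qschemoid
   \<Rightarrow> ('o1 \<times> 'o2, 'm1 \<times> 'm2) qschemoid" where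
  "qs_prod A B = \<lparr> Ob = Ob A \<times> Ob B, Mor = Mor A \<times> Mor B,
     Dom = (\<lambda>(f, g). (Dom A f, Dom B g)),
     Cod = (\<lambda>(f, g). (Cod A f, Cod B g)),
     Idm = (\<lambda>(a, b). (Idm A a, Idm B b)),
     Cmp = (\<lambda>(g1, g2) (f1, f2). (Cmp A g1 f1, Cmp B g2 f2)),
     Part = {\<sigma> \<times> \<tau> | \<sigma> \<tau>. \<sigma> \<in> Part A \<and> \<tau> \<in> Part B} \<rparr>"

text \<open>The quasi-schemoid jmath(X,S): objects X, Hom(y,x) = {(x,y)}, (z,x) o (x,y) = (z,y).\<close>
definition jmath :: "'a set \<Rightarrow> ('a \<times> 'a) set set \<Rightarrow> ('a, 'a \<times> 'a) qschemoid" where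
  "jmath X S = \<lparr> Ob = X, Mor = X \<times> X, Dom = snd, Cod = fst, Idm = (\<lambda>x. (x, x)),
     Cmp = (\<lambda>g f. (fst g, snd f)), Part = S \<rparr>"

text \<open>I = ([1], discrete partition): objects 0,1; morphisms (0,0),(1,1),(1,0) where (1,0): 0 \<rightarrow> 1
  (same convention as jmath: (j,i) is the morphism i \<rightarrow> j).\<close>
definition qsI :: "(nat, nat \<times> nat) qschemoid" where
  "qsI = \<lparr> Ob = {0, 1}, Mor = {(0, 0), (1, 1), (1, 0)}, Dom = snd, Cod = fst,
     Idm = (\<lambda>i. (i, i)), Cmp = (\<lambda>g f. (fst g, snd f)),
     Part = {{m} | m. m \<in> {(0, 0), (1, 1), (1, 0)}} \<rparr>"

definition eps :: "nat \<Rightarrow> ('o \<Rightarrow> 'o \<times> nat) \<times> ('m \<Rightarrow> 'm \<times> (nat \<times> nat))" where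
  "eps i = ((\<lambda>a. (a, i)), (\<lambda>f. (f, Idm qsI i)))"

definition homotopy ::
  "('o1, 'm1) qschemoid \<Rightarrow> ('o2, 'm2) qschemoid
   \<Rightarrow> ('o1 \<times> nat \<Rightarrow> 'o2) \<times> ('m1 \<times> (nat \<times> nat) \<Rightarrow> 'm2)
   \<Rightarrow> ('o1 \<Rightarrow> 'o2) \<times> ('m1 \<Rightarrow> 'm2) \<Rightarrow> ('o1 \<Rightarrow> 'o2) \<times> ('m1 \<Rightarrow> 'm2) \<Rightarrow> bool" where
  "homotopy A B H F G \<longleftrightarrow> qs_morphism (qs_prod A qsI) B H \<and>
     fun_eq A (fcomp H (eps 0)) F \<and> fun_eq A (fcomp H (eps 1)) G"

definition htp_rel :: "('o1, 'm1) qschemoid \<Rightarrow> ('o2, 'm2) qschemoid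
   \<Rightarrow> ('o1 \<Rightarrow> 'o2) \<times> ('m1 \<Rightarrow> 'm2) \<Rightarrow> ('o1 \<Rightarrow> 'o2) \<times> ('m1 \<Rightarrow> 'm2) \<Rightarrow> bool" where
  "htp_rel A B F G \<longleftrightarrow> (\<exists>H. homotopy A B H F G) \<or> (\<exists>H. homotopy A B H G F)"

definition htp_eq :: "('o1, 'm1) qschemoid \<Rightarrow> ('o2, 'm2) qschemoid
   \<Rightarrow> ('o1 \<Rightarrow> 'o2) \<times> ('m1 \<Rightarrow> 'm2) \<Rightarrow> ('o1 \<Rightarrow> 'o2) \<times> ('m1 \<Rightarrow> 'm2) \<Rightarrow> bool" where
  "htp_eq A B = (htp_rel A B)\<^sup>*\<^sup>*"

definition self_htp_equiv :: "('o, 'm) qschemoid \<Rightarrow> ('o \<Rightarrow> 'o) \<times> ('m \<Rightarrow> 'm) \<Rightarrow> bool" where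
  "self_htp_equiv A F \<longleftrightarrow> qs_morphism A A F \<and>
     (\<exists>G. qs_morphism A A G \<and> htp_eq A A (fcomp F G) fid \<and> htp_eq A A (fcomp G F) fid)"

end

theory Submission
  imports Defs
begin

text \<open>A morphism into the trivial scheme sends each block of its source either entirely into
  the diagonal or entirely off it. Applied to the blocks \<sigma> \<times> {0 \<rightarrow> 1} of a homotopy H from K to L,
  this says that L x = K x for all x or for none, and that L x = K y for all pairs x \<noteq> y or for
  none. If K is injective, hence a bijection of the finite set X, and the first alternative fails,
  then L x = K y for some y \<noteq> x, so the second alternative holds; two such y (there are at least
  three points) contradict injectivity of K. Both alternatives being symmetric in K and L,
  homotopies preserve injectivity and fix injective functors. For a self-homotopy equivalence F
  with homotopy inverse G, the composite G \<circ> F is connected to the identity by a chain of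
  homotopies, so it is injective, and so is F.\<close>

lemma qs_morphism_into_jmath_arrow:
  assumes "qs_morphism A (jmath X S) F" and "m \<in> Mor A"
  shows "snd F m = (fst F (Cod A m), fst F (Dom A m))"
proof -
  have "Dom (jmath X S) (snd F m) = fst F (Dom A m)"
    and "Cod (jmath X S) (snd F m) = fst F (Cod A m)"
    using assms unfolding qs_morphism_def by blast+
  then show ?thesis by (simp add: jmath_def prod_eq_iff)
qed

lemma qs_morphism_into_trivial_scheme_block:
  assumes S: "S = {Id_on X, X \<times> X - Id_on X}"
    and F: "qs_morphism A (jmath X S) F"
    and \<sigma>: "\<sigma> \<in> Part A" "\<sigma> \<subseteq> Mor A"
  shows "(\<forall>m\<in>\<sigma>. fst F (Cod A m) = fst F (Dom A m)) \<or>
         (\<forall>m\<in>\<sigma>. fst F (Cod A m) \<noteq> fst F (Dom A m))"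
proof -
  obtain \<tau> where "\<tau> \<in> S" and \<tau>: "snd F ` \<sigma> \<subseteq> \<tau>"
    using F \<sigma>(1) unfolding qs_morphism_def by (auto simp: jmath_def)
  moreover have "snd F m = (fst F (Cod A m), fst F (Dom A m))" if "m \<in> \<sigma>" for m
    using qs_morphism_into_jmath_arrow[OF F] \<sigma>(2) that by blast
  ultimately show ?thesis
    using S by (auto simp: image_subset_iff Id_on_iff)
qed

lemma homotopy_into_trivial_scheme:
  assumes S: "S = {Id_on X, X \<times> X - Id_on X}"
    and H: "homotopy (jmath X S) (jmath X S) H K L"
  shows "fst K ` X \<subseteq> X" and "fst L ` X \<subseteq> X"
    and "(\<forall>x\<in>X. fst L x = fst K x) \<or> (\<forall>x\<in>X. fst L x \<noteq> fst K x)"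
    and "(\<forall>x\<in>X. \<forall>y\<in>X. x \<noteq> y \<longrightarrow> fst L x = fst K y) \<or>
         (\<forall>x\<in>X. \<forall>y\<in>X. x \<noteq> y \<longrightarrow> fst L x \<noteq> fst K y)"
proof -
  let ?P = "qs_prod (jmath X S) qsI"
  have Hm: "qs_morphism ?P (jmath X S) H"
    and H0: "fun_eq (jmath X S) (fcomp H (eps 0)) K"
    and H1: "fun_eq (jmath X S) (fcomp H (eps 1)) L"
    using H unfolding homotopy_def by blast+
  have K: "fst K x = fst H (x, 0)" and L: "fst L x = fst H (x, 1)" if "x \<in> X" for x
    using H0 H1 that by (simp_all add: fun_eq_def fcomp_def eps_def jmath_def)
  have "fst H (x, i) \<in> X" if "x \<in> X" "i \<in> {0, 1}" for x i
  proof -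
    have "(x, i) \<in> Ob ?P" using that by (simp add: qs_prod_def jmath_def qsI_def)
    then show ?thesis using Hm unfolding qs_morphism_def by (simp add: jmath_def)
  qed
  then show "fst K ` X \<subseteq> X" and "fst L ` X \<subseteq> X"
    using K L by auto
  have arrow_block: "(\<forall>x\<in>X. \<forall>y\<in>X. (x, y) \<in> B \<longrightarrow> fst L x = fst K y) \<or>
      (\<forall>x\<in>X. \<forall>y\<in>X. (x, y) \<in> B \<longrightarrow> fst L x \<noteq> fst K y)"
    if "B \<in> S" for B
  proof -
    have B: "B \<subseteq> X \<times> X" using \<open>B \<in> S\<close> S by auto
    have "B \<times> {(1, 0)} \<in> Part ?P" and "B \<times> {(1, 0)} \<subseteq> Mor ?P"
      using \<open>B \<in> S\<close> B by (auto simp: qs_prod_def jmath_def qsI_def)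
    from qs_morphism_into_trivial_scheme_block[OF S Hm this]
    have "(\<forall>(x, y)\<in>B. fst H (x, 1) = fst H (y, 0)) \<or> (\<forall>(x, y)\<in>B. fst H (x, 1) \<noteq> fst H (y, 0))"
      by (simp add: qs_prod_def jmath_def qsI_def split_def)
    then show ?thesis
      using K L by auto
  qed
  show "(\<forall>x\<in>X. fst L x = fst K x) \<or> (\<forall>x\<in>X. fst L x \<noteq> fst K x)"
    using arrow_block[of "Id_on X"] S by (auto simp: Id_on_iff)
  show "(\<forall>x\<in>X. \<forall>y\<in>X. x \<noteq> y \<longrightarrow> fst L x = fst K y) \<or>
        (\<forall>x\<in>X. \<forall>y\<in>X. x \<noteq> y \<longrightarrow> fst L x \<noteq> fst K y)"
    using arrow_block[of "X \<times> X - Id_on X"] S by (auto simp: Id_on_iff)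
qed

lemma card_ge_3_obtain_distinct:
  assumes "card X \<ge> 3"
  obtains x y z where "x \<in> X" "y \<in> X" "z \<in> X" "x \<noteq> y" "y \<noteq> z" "x \<noteq> z"
proof -
  obtain T where "T \<subseteq> X" "card T = 3"
    using obtain_subset_with_card_n[OF assms] by blast
  then obtain x y z where "T = {x, y, z}" "x \<noteq> y" "y \<noteq> z" "x \<noteq> z"
    unfolding card_3_iff by auto
  with \<open>T \<subseteq> X\<close> show ?thesis
    using that by blast
qed

lemma inj_endomap_eq_if_all_or_none:
  fixes f g :: "'a \<Rightarrow> 'a"
  assumes "card X \<ge> 3" and f: "inj_on f X" "f ` X \<subseteq> X" and "g ` X \<subseteq> X"
    and diag: "(\<forall>x\<in>X. g x = f x) \<or> (\<forall>x\<in>X. g x \<noteq> f x)"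
    and off_diag: "(\<forall>x\<in>X. \<forall>y\<in>X. x \<noteq> y \<longrightarrow> g x = f y) \<or>
                   (\<forall>x\<in>X. \<forall>y\<in>X. x \<noteq> y \<longrightarrow> g x \<noteq> f y)"
  shows "\<forall>x\<in>X. g x = f x"
proof (rule ccontr)
  assume "\<not> (\<forall>x\<in>X. g x = f x)"
  with diag have nowhere: "\<forall>x\<in>X. g x \<noteq> f x" by simp
  obtain x y z where xyz: "x \<in> X" "y \<in> X" "z \<in> X" "x \<noteq> y" "y \<noteq> z" "x \<noteq> z"
    using card_ge_3_obtain_distinct[OF \<open>card X \<ge> 3\<close>] by blast
  have "finite X"
    using \<open>card X \<ge> 3\<close> card.infinite by fastforce
  then have "g x \<in> f ` X"
    using endo_inj_surj[OF _ f(2) f(1)] \<open>g ` X \<subseteq> X\<close> xyz(1) by auto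
  then obtain w where w: "w \<in> X" "g x = f w" by blast
  with nowhere xyz(1) have "w \<noteq> x" by auto
  with w xyz(1) have "\<not> (\<forall>x\<in>X. \<forall>y\<in>X. x \<noteq> y \<longrightarrow> g x \<noteq> f y)"
    by metis
  with off_diag have everywhere: "\<forall>x\<in>X. \<forall>y\<in>X. x \<noteq> y \<longrightarrow> g x = f y"
    by blast
  have "g x = f y" using everywhere xyz(1,2,4) by blast
  moreover have "g x = f z" using everywhere xyz(1,3,6) by blast
  ultimately show False
    using inj_onD[OF f(1), of y z] xyz by metis
qed

lemma qs_morphism_jmath_eqI:
  assumes F: "qs_morphism (jmath Y T) (jmath X S) F"
    and G: "qs_morphism (jmath Y T) (jmath X S) G"
    and objects: "\<forall>y\<in>Y. fst F y = fst G y"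
  shows "fun_eq (jmath Y T) F G"
proof -
  have "snd F m = snd G m" if "m \<in> Y \<times> Y" for m
  proof -
    have "m \<in> Mor (jmath Y T)" using that by (simp add: jmath_def)
    then show ?thesis
      using qs_morphism_into_jmath_arrow[OF F] qs_morphism_into_jmath_arrow[OF G] objects that
      by (auto simp: jmath_def)
  qed
  with objects show ?thesis
    by (simp add: fun_eq_def jmath_def)
qed

lemma htp_rel_sym: "htp_rel A B K L \<longleftrightarrow> htp_rel A B L K"
  unfolding htp_rel_def by blast

lemma htp_rel_trivial_scheme_eq_if_inj:
  assumes S: "S = {Id_on X, X \<times> X - Id_on X}" and "card X \<ge> 3"
    and R: "htp_rel (jmath X S) (jmath X S) K L" and K: "inj_on (fst K) X"
  shows "\<forall>x\<in>X. fst L x = fst K x"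
  using R unfolding htp_rel_def
proof
  assume "\<exists>H. homotopy (jmath X S) (jmath X S) H K L"
  then obtain H where "homotopy (jmath X S) (jmath X S) H K L" by blast
  note ends = homotopy_into_trivial_scheme[OF S this]
  show ?thesis
    by (rule inj_endomap_eq_if_all_or_none[OF \<open>card X \<ge> 3\<close> K ends])
next
  assume "\<exists>H. homotopy (jmath X S) (jmath X S) H L K"
  then obtain H where "homotopy (jmath X S) (jmath X S) H L K" by blast
  note ends = homotopy_into_trivial_scheme[OF S this]
  \<comment> \<open>the conditions on the arrow 0 \<rightarrow> 1 are symmetric in its two ends\<close>
  have "(\<forall>x\<in>X. fst L x = fst K x) \<or> (\<forall>x\<in>X. fst L x \<noteq> fst K x)"
    using ends(3) by force
  moreover have "(\<forall>x\<in>X. \<forall>y\<in>X. x \<noteq> y \<longrightarrow> fst L x = fst K y) \<or>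
      (\<forall>x\<in>X. \<forall>y\<in>X. x \<noteq> y \<longrightarrow> fst L x \<noteq> fst K y)"
    using ends(4) by force
  ultimately show ?thesis
    by (rule inj_endomap_eq_if_all_or_none[OF \<open>card X \<ge> 3\<close> K ends(2,1)])
qed

lemma htp_rel_trivial_scheme_inj_iff:
  assumes S: "S = {Id_on X, X \<times> X - Id_on X}" and "card X \<ge> 3"
    and R: "htp_rel (jmath X S) (jmath X S) K L"
  shows "inj_on (fst K) X \<longleftrightarrow> inj_on (fst L) X"
proof -
  have inj: "inj_on (fst L') X"
    if R': "htp_rel (jmath X S) (jmath X S) K' L'" and K': "inj_on (fst K') X" for K' L'
  proof -
    have "inj_on (fst L') X \<longleftrightarrow> inj_on (fst K') X"
      using htp_rel_trivial_scheme_eq_if_inj[OF S \<open>card X \<ge> 3\<close> R' K'] by (simp cong: inj_on_cong)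
    with K' show ?thesis by simp
  qed
  show ?thesis
    using inj[OF R] inj[OF R[unfolded htp_rel_sym[of _ _ K]]] by blast
qed

lemma htp_eq_trivial_scheme_inj_iff:
  assumes S: "S = {Id_on X, X \<times> X - Id_on X}" and "card X \<ge> 3"
    and "htp_eq (jmath X S) (jmath X S) K L"
  shows "inj_on (fst K) X \<longleftrightarrow> inj_on (fst L) X"
  using assms(3) unfolding htp_eq_def
proof (induction rule: rtranclp_induct)
  case base
  then show ?case by simp
next
  case (step L M)
  then show ?case
    using htp_rel_trivial_scheme_inj_iff[OF S \<open>card X \<ge> 3\<close> step.hyps(2)] by simp
qed

lemma self_htp_equiv_trivial_scheme_inj:
  assumes S: "S = {Id_on X, X \<times> X - Id_on X}" and "card X \<ge> 3"
    and "self_htp_equiv (jmath X S) F"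
  shows "inj_on (fst F) X"
proof -
  obtain G where "htp_eq (jmath X S) (jmath X S) (fcomp G F) fid"
    using assms(3) unfolding self_htp_equiv_def by blast
  from htp_eq_trivial_scheme_inj_iff[OF S \<open>card X \<ge> 3\<close> this]
  have "inj_on (fst G \<circ> fst F) X"
    by (simp add: fcomp_def fid_def)
  then show ?thesis by (rule inj_on_imageI2)
qed

theorem lemma4p3:
  fixes X :: "'a set" and S :: "('a \<times> 'a) set set"
    and F G :: "('a \<Rightarrow> 'a) \<times> ('a \<times> 'a \<Rightarrow> 'a \<times> 'a)"
  assumes "is_assoc_scheme X S"
    and "S = {Id_on X, (X \<times> X) - Id_on X}"
    and "card X \<ge> 3"
    and "self_htp_equiv (jmath X S) F"
    and "self_htp_equiv (jmath X S) G"
    and "htp_rel (jmath X S) (jmath X S) F G"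
  shows "fun_eq (jmath X S) F G"
proof (rule qs_morphism_jmath_eqI)
  show "qs_morphism (jmath X S) (jmath X S) F" "qs_morphism (jmath X S) (jmath X S) G"
    using assms(4,5) unfolding self_htp_equiv_def by blast+
  have "inj_on (fst F) X"
    using self_htp_equiv_trivial_scheme_inj[OF assms(2,3,4)] .
  then show "\<forall>x\<in>X. fst F x = fst G x"
    using htp_rel_trivial_scheme_eq_if_inj[OF assms(2,3,6)] by simp
qed

end
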